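(* For any $z\ge1$, $$\mathcal{E}^{\mathrm{TW}}_{m,1}\le 2z^{-\nu}\,\mathcal{K}(z),\qquad \nu=\lceil n/2\rceil.$$
   Context: $m$-twist system with parameter $\rho\in(0,1/2]$ on $n$ agents: at each time $t$ the agents are relabeled so that their positions satisfy $x_1\le\dots\le x_n$. A partition of $[n]$ into at most $m$ intervals of consecutive indices $[u_{t,l},v_{t,l}]$ (blocks) is given. The next sorted positions $y_1\le\dots\le y_n$ satisfy, for every block $[u,v]$ and $i\in[u,v]$, $$(1-\rho)x_u+\rho x_{\min\{i+1,v\}}\le y_i\le\rho x_{\max\{i-1,u\}}+(1-\rho)x_v.$$ Definitions: - The $1$-energy is $\sum_t\sum_l(x_{v_{t,l}}(t)-x_{u_{t,l}}(t))$. - $\mathcal{E}^{\mathrm{TW}}_{m,1}$ is its supremum over all $m$-twist systems with initial positions in $[0,1]$. - For $k\in[n]$, let $v(k)$ (resp. $u(k)$) be the right (resp. left) endpoint of the block containing $k$ at time $t$. - $K_t(z)=\sum_{k=1}^n(x_{v(k)}(t)-x_k(t))z^k$, and $K(z)=\sum_{t\ge0}K_t(z)$. - $\mathcal{K}(z)$ is the supremum of $K(z)$ over all $m$-twist systems with initial positions in $[0,1]$. *)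

theory Defs
  imports Complex_Main "HOL-Library.Extended_Nonnegative_Real"
begin

text \<open>Agents are indexed 1..n. A configuration at time t is x t :: nat => real
(only indices 1..n matter), always stored in sorted order. A block partition at
time t is a finite set of pairs (u,v) standing for the index interval [u,v].\<close>

definition block_partition :: "nat \<Rightarrow> nat \<Rightarrow> (nat \<times> nat) set \<Rightarrow> bool" where
  "block_partition n m B \<longleftrightarrow> finite B \<and> card B \<le> m \<and>
     (\<forall>(u,v)\<in>B. 1 \<le> u \<and> u \<le> v \<and> v \<le> n) \<and>
     (\<forall>k\<in>{1..n}. \<exists>!p. p \<in> B \<and> fst p \<le> k \<and> k \<le> snd p)"

definition twist_system ::
  "nat \<Rightarrow> nat \<Rightarrow> real \<Rightarrow> (nat \<Rightarrow> nat \<Rightarrow> real) \<Rightarrow> (nat \<Rightarrow> (nat \<times> nat) set) \<Rightarrow> bool" where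
  "twist_system n m \<rho> x B \<longleftrightarrow>
     (\<forall>t. (\<forall>i j. 1 \<le> i \<longrightarrow> i \<le> j \<longrightarrow> j \<le> n \<longrightarrow> x t i \<le> x t j) \<and>
          block_partition n m (B t) \<and>
          (\<forall>(u,v)\<in>B t. \<forall>i\<in>{u..v}.
              (1 - \<rho>) * x t u + \<rho> * x t (min (i + 1) v) \<le> x (Suc t) i \<and>
              x (Suc t) i \<le> \<rho> * x t (max (i - 1) u) + (1 - \<rho>) * x t v))"

definition blk_right :: "(nat \<times> nat) set \<Rightarrow> nat \<Rightarrow> nat" where
  "blk_right B k = snd (THE p. p \<in> B \<and> fst p \<le> k \<and> k \<le> snd p)"

definition one_energy :: "(nat \<Rightarrow> nat \<Rightarrow> real) \<Rightarrow> (nat \<Rightarrow> (nat \<times> nat) set) \<Rightarrow> ennreal" where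
  "one_energy x B = (\<Sum>t. ennreal (\<Sum>p\<in>B t. x t (snd p) - x t (fst p)))"

definition K_gen :: "nat \<Rightarrow> (nat \<Rightarrow> nat \<Rightarrow> real) \<Rightarrow> (nat \<Rightarrow> (nat \<times> nat) set) \<Rightarrow> real \<Rightarrow> ennreal" where
  "K_gen n x B z = (\<Sum>t. ennreal (\<Sum>k=1..n. (x t (blk_right (B t) k) - x t k) * z ^ k))"

definition admissible :: "nat \<Rightarrow> nat \<Rightarrow> real \<Rightarrow> ((nat \<Rightarrow> nat \<Rightarrow> real) \<times> (nat \<Rightarrow> (nat \<times> nat) set)) set" where
  "admissible n m \<rho> = {(x, B). twist_system n m \<rho> x B \<and> (\<forall>i\<in>{1..n}. 0 \<le> x 0 i \<and> x 0 i \<le> 1)}"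

definition E_TW :: "nat \<Rightarrow> nat \<Rightarrow> real \<Rightarrow> ennreal" where
  "E_TW n m \<rho> = (SUP (x, B)\<in>admissible n m \<rho>. one_energy x B)"

definition K_TW :: "nat \<Rightarrow> nat \<Rightarrow> real \<Rightarrow> real \<Rightarrow> ennreal" where
  "K_TW n m \<rho> z = (SUP (x, B)\<in>admissible n m \<rho>. K_gen n x B z)"

end

theory Submission
  imports Defs
begin

text \<open>Reflecting positions \<open>x \<mapsto> 1 - x\<close> and indices \<open>k \<mapsto> n + 1 - k\<close> turns an admissible
twist system into another one. For a block \<open>[u, v]\<close> let \<open>k\<close> be \<open>\<nu>\<close> clamped into \<open>[u, v]\<close>; then
\<open>z^\<nu> (x v - x u) \<le> (x v - x k) z^k + (x k - x u) z^(n + 1 - k)\<close>, since \<open>\<nu> \<le> k\<close> unless \<open>k = v\<close>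
and \<open>\<nu> \<le> n + 1 - k\<close> unless \<open>k = u\<close>. The first summand is the \<open>k\<close>-th term of \<open>K_t(z)\<close>, the
second the \<open>(n + 1 - k)\<close>-th term of \<open>K_t(z)\<close> for the reflected system. Distinct blocks give
distinct \<open>k\<close>, so summing over blocks and time bounds \<open>z^\<nu>\<close> times the 1-energy by \<open>2 \<K>(z)\<close>.\<close>

definition K_slice :: "nat \<Rightarrow> (nat \<Rightarrow> real) \<Rightarrow> (nat \<times> nat) set \<Rightarrow> real \<Rightarrow> real" where
  "K_slice n y P z = (\<Sum>k=1..n. (y (blk_right P k) - y k) * z ^ k)"

definition reflect_pos :: "nat \<Rightarrow> (nat \<Rightarrow> real) \<Rightarrow> nat \<Rightarrow> real" where
  "reflect_pos n y k = 1 - y (n + 1 - k)"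

definition reflect_blocks :: "nat \<Rightarrow> (nat \<times> nat) set \<Rightarrow> (nat \<times> nat) set" where
  "reflect_blocks n P = (\<lambda>(u, v). (n + 1 - v, n + 1 - u)) ` P"

lemma K_gen_eq_suminf_K_slice: "K_gen n x B z = (\<Sum>t. ennreal (K_slice n (x t) (B t) z))"
  unfolding K_gen_def K_slice_def ..

lemma block_partitionD:
  assumes "block_partition n m P"
  shows "finite P" and "\<And>u v. (u, v) \<in> P \<Longrightarrow> 1 \<le> u \<and> u \<le> v \<and> v \<le> n"
    and "\<And>k. k \<in> {1..n} \<Longrightarrow> \<exists>!p. p \<in> P \<and> fst p \<le> k \<and> k \<le> snd p"
  using assms unfolding block_partition_def by auto

lemma block_partition_unique_block:
  assumes "block_partition n m P" "k \<in> {1..n}"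
    and "(u, v) \<in> P" "u \<le> k" "k \<le> v" "(u', v') \<in> P" "u' \<le> k" "k \<le> v'"
  shows "u' = u \<and> v' = v"
  using block_partitionD(3)[OF assms(1,2)] assms(3-8) by (metis fst_conv snd_conv)

lemma blk_right_eq:
  assumes "block_partition n m P" "(u, v) \<in> P" "u \<le> k" "k \<le> v" "k \<in> {1..n}"
  shows "blk_right P k = v"
proof -
  have "(THE p. p \<in> P \<and> fst p \<le> k \<and> k \<le> snd p) = (u, v)"
    using block_partitionD(3)[OF assms(1,5)] assms(2-4) by (intro the1_equality) auto
  then show ?thesis unfolding blk_right_def by simp
qed

lemma blk_right_bounds:
  assumes "block_partition n m P" "k \<in> {1..n}"
  shows "k \<le> blk_right P k" and "blk_right P k \<le> n"
proof -
  obtain u v where uv: "(u, v) \<in> P" "u \<le> k" "k \<le> v"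
    using block_partitionD(3)[OF assms] by force
  then have "blk_right P k = v" using blk_right_eq[OF assms(1) _ _ _ assms(2)] by simp
  then show "k \<le> blk_right P k" "blk_right P k \<le> n"
    using uv block_partitionD(2)[OF assms(1) uv(1)] by auto
qed

lemma K_slice_term_nonneg:
  fixes y :: "nat \<Rightarrow> real"
  assumes "block_partition n m P" "mono_on {1..n} y" "1 \<le> z" "k \<in> {1..n}"
  shows "0 \<le> (y (blk_right P k) - y k) * z ^ k"
proof -
  have "y k \<le> y (blk_right P k)"
    using blk_right_bounds[OF assms(1,4)] assms(4) by (intro mono_onD[OF assms(2)]) auto
  then show ?thesis using assms(3) by simp
qed

lemma block_partition_reflect_blocks:
  assumes P: "block_partition n m P"
  shows "block_partition n m (reflect_blocks n P)"
proof -
  let ?r = "\<lambda>(u, v). (n + 1 - v, n + 1 - u)"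
  have card: "card (?r ` P) \<le> m"
    using card_image_le[OF block_partitionD(1)[OF P], of ?r] P
    unfolding block_partition_def by linarith
  have bounds: "\<forall>(u, v)\<in>?r ` P. 1 \<le> u \<and> u \<le> v \<and> v \<le> n"
  proof
    fix q assume "q \<in> ?r ` P"
    then obtain u v where uv: "(u, v) \<in> P" "q = ?r (u, v)" by auto
    then show "case q of (u, v) \<Rightarrow> 1 \<le> u \<and> u \<le> v \<and> v \<le> n"
      using block_partitionD(2)[OF P uv(1)] by auto
  qed
  have cover: "\<exists>!p. p \<in> ?r ` P \<and> fst p \<le> k \<and> k \<le> snd p" if k: "k \<in> {1..n}" for k
  proof -
    have k': "n + 1 - k \<in> {1..n}" using k by auto
    obtain u v where uv: "(u, v) \<in> P" "u \<le> n + 1 - k" "n + 1 - k \<le> v"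
      using block_partitionD(3)[OF P k'] by force
    show ?thesis
    proof (rule ex1I[of _ "?r (u, v)"])
      show "?r (u, v) \<in> ?r ` P \<and> fst (?r (u, v)) \<le> k \<and> k \<le> snd (?r (u, v))"
        using uv block_partitionD(2)[OF P uv(1)] k by auto
    next
      fix q assume q: "q \<in> ?r ` P \<and> fst q \<le> k \<and> k \<le> snd q"
      then obtain u' v' where uv': "(u', v') \<in> P" "q = ?r (u', v')" by auto
      have "u' \<le> n + 1 - k" "n + 1 - k \<le> v'"
        using q uv' block_partitionD(2)[OF P uv'(1)] k by auto
      then show "q = ?r (u, v)"
        using block_partition_unique_block[OF P k' uv uv'(1)] uv'(2) by simp
    qed
  qed
  show ?thesis
    unfolding block_partition_def reflect_blocks_def
    by (intro conjI finite_imageI block_partitionD(1)[OF P] card bounds ballI cover)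
qed

lemma mono_on_reflect_pos:
  assumes "mono_on {1..n} y"
  shows "mono_on {1..n} (reflect_pos n y)"
proof (rule mono_onI)
  fix r s assume "r \<in> {1..n}" "s \<in> {1..n}" "r \<le> s"
  then have "y (n + 1 - s) \<le> y (n + 1 - r)" by (intro mono_onD[OF assms]) auto
  then show "reflect_pos n y r \<le> reflect_pos n y s" unfolding reflect_pos_def by simp
qed

lemma blk_right_reflect_blocks:
  assumes "block_partition n m P" "(u, v) \<in> P" "u \<le> k" "k \<le> v" "k \<in> {1..n}"
  shows "blk_right (reflect_blocks n P) (n + 1 - k) = n + 1 - u"
proof -
  have "(n + 1 - v, n + 1 - u) \<in> reflect_blocks n P"
    unfolding reflect_blocks_def using assms(2) by force
  moreover have "1 \<le> u" "v \<le> n" using block_partitionD(2)[OF assms(1,2)] by auto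
  ultimately show ?thesis
    using assms(3-5) by (intro blk_right_eq[OF block_partition_reflect_blocks[OF assms(1)]]) auto
qed

lemma twist_system_sorted: "twist_system n m \<rho> x B \<Longrightarrow> mono_on {1..n} (x t)"
  unfolding twist_system_def by (intro mono_onI) auto

lemma twist_system_block_partition: "twist_system n m \<rho> x B \<Longrightarrow> block_partition n m (B t)"
  unfolding twist_system_def by blast

lemma twist_system_reflect:
  assumes "twist_system n m \<rho> x B"
  shows "twist_system n m \<rho> (\<lambda>t. reflect_pos n (x t)) (\<lambda>t. reflect_blocks n (B t))"
  unfolding twist_system_def
proof (rule allI, intro conjI)
  fix t
  have P: "block_partition n m (B t)" by (rule twist_system_block_partition[OF assms])
  show "block_partition n m (reflect_blocks n (B t))"
    by (rule block_partition_reflect_blocks[OF P])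
  show "\<forall>i j. 1 \<le> i \<longrightarrow> i \<le> j \<longrightarrow> j \<le> n \<longrightarrow> reflect_pos n (x t) i \<le> reflect_pos n (x t) j"
    using mono_on_reflect_pos[OF twist_system_sorted[OF assms, of t]]
    unfolding mono_on_def monotone_on_def by auto
  show "\<forall>(u', v')\<in>reflect_blocks n (B t). \<forall>i'\<in>{u'..v'}.
          (1 - \<rho>) * reflect_pos n (x t) u' + \<rho> * reflect_pos n (x t) (min (i' + 1) v')
            \<le> reflect_pos n (x (Suc t)) i' \<and>
          reflect_pos n (x (Suc t)) i'
            \<le> \<rho> * reflect_pos n (x t) (max (i' - 1) u') + (1 - \<rho>) * reflect_pos n (x t) v'"
  proof (clarify, unfold reflect_blocks_def, clarify)
    fix u v i' assume uv: "(u, v) \<in> B t" and i': "i' \<in> {n + 1 - v..n + 1 - u}"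
    have b: "1 \<le> u" "u \<le> v" "v \<le> n" using block_partitionD(2)[OF P uv] by auto
    define i where "i = n + 1 - i'"
    have i: "i \<in> {u..v}" "i' = n + 1 - i" using i' b unfolding i_def by auto
    have step: "(1 - \<rho>) * x t u + \<rho> * x t (min (i + 1) v) \<le> x (Suc t) i"
      "x (Suc t) i \<le> \<rho> * x t (max (i - 1) u) + (1 - \<rho>) * x t v"
      using assms uv i(1) unfolding twist_system_def by fastforce+
    \<comment> \<open>the reflection swaps the lower and the upper bound of the update rule\<close>
    have idx: "n + 1 - (n + 1 - v) = v" "n + 1 - (n + 1 - u) = u" "n + 1 - i' = i"
      "n + 1 - min (i' + 1) (n + 1 - u) = max (i - 1) u"
      "n + 1 - max (i' - 1) (n + 1 - v) = min (i + 1) v"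
      using b i by auto
    show "(1 - \<rho>) * reflect_pos n (x t) (n + 1 - v)
            + \<rho> * reflect_pos n (x t) (min (i' + 1) (n + 1 - u)) \<le> reflect_pos n (x (Suc t)) i' \<and>
          reflect_pos n (x (Suc t)) i'
            \<le> \<rho> * reflect_pos n (x t) (max (i' - 1) (n + 1 - v))
              + (1 - \<rho>) * reflect_pos n (x t) (n + 1 - u)"
      unfolding reflect_pos_def idx using step by (simp add: algebra_simps)
  qed
qed

lemma admissible_reflect:
  assumes "(x, B) \<in> admissible n m \<rho>"
  shows "(\<lambda>t. reflect_pos n (x t), \<lambda>t. reflect_blocks n (B t)) \<in> admissible n m \<rho>"
proof -
  have "0 \<le> reflect_pos n (x 0) i \<and> reflect_pos n (x 0) i \<le> 1" if "i \<in> {1..n}" for i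
  proof -
    have "n + 1 - i \<in> {1..n}" using that by auto
    then show ?thesis using assms unfolding admissible_def reflect_pos_def by auto
  qed
  then show ?thesis using assms twist_system_reflect unfolding admissible_def by auto
qed

lemma double_ceiling_half_le: "2 * nat \<lceil>real n / 2\<rceil> \<le> n + 1"
proof -
  have "n \<le> 2 * ((n + 1) div 2)" by linarith
  then have "real n / 2 \<le> real ((n + 1) div 2)" by linarith
  then have "nat \<lceil>real n / 2\<rceil> \<le> (n + 1) div 2"
    by (simp add: ceiling_le_iff nat_le_iff)
  then show ?thesis by linarith
qed

lemma power_split_ineq:
  fixes a b c z :: real
  assumes "1 \<le> z" "a \<le> b" "b \<le> c" "b = c \<or> p \<le> i" "a = b \<or> p \<le> j"
  shows "z ^ p * (c - a) \<le> (c - b) * z ^ i + (b - a) * z ^ j"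
proof -
  have "(c - b) * z ^ p \<le> (c - b) * z ^ i"
    using assms(1,3,4) by (auto intro: mult_left_mono power_increasing)
  moreover have "(b - a) * z ^ p \<le> (b - a) * z ^ j"
    using assms(1,2,5) by (auto intro: mult_left_mono power_increasing)
  ultimately show ?thesis by (simp add: algebra_simps)
qed

lemma clamp_index:
  fixes u v \<nu> :: nat
  assumes "u \<le> v" "v \<le> n" "2 * \<nu> \<le> n + 1"
  defines "k \<equiv> max u (min v \<nu>)"
  shows "u \<le> k" "k \<le> v" "k = v \<or> \<nu> \<le> k" "k = u \<or> \<nu> \<le> n + 1 - k"
  using assms unfolding k_def by auto

lemma block_sum_le_K_slice_reflect:
  fixes y :: "nat \<Rightarrow> real"
  assumes P: "block_partition n m P" and y: "mono_on {1..n} y" and z: "1 \<le> z"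
    and \<nu>: "2 * \<nu> \<le> n + 1"
  shows "z ^ \<nu> * (\<Sum>p\<in>P. y (snd p) - y (fst p))
           \<le> K_slice n y P z + K_slice n (reflect_pos n y) (reflect_blocks n P) z"
proof -
  define a where "a k = (y (blk_right P k) - y k) * z ^ k" for k
  define a' where "a' k = (reflect_pos n y (blk_right (reflect_blocks n P) k)
    - reflect_pos n y k) * z ^ k" for k
  define kp where "kp p = max (fst p) (min (snd p) \<nu>)" for p :: "nat \<times> nat"
  have kp: "fst p \<le> kp p" "kp p \<le> snd p" "kp p \<in> {1..n}"
    "kp p = snd p \<or> \<nu> \<le> kp p" "kp p = fst p \<or> \<nu> \<le> n + 1 - kp p" if "p \<in> P" for p
  proof -
    have b: "1 \<le> fst p" "fst p \<le> snd p" "snd p \<le> n"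
      using block_partitionD(2)[OF P, of "fst p" "snd p"] that by simp_all
    note clamp = clamp_index[OF b(2,3) \<nu>, folded kp_def]
    then show "fst p \<le> kp p" "kp p \<le> snd p"
      "kp p = snd p \<or> \<nu> \<le> kp p" "kp p = fst p \<or> \<nu> \<le> n + 1 - kp p" by simp_all
    show "kp p \<in> {1..n}" using clamp b by simp
  qed
  have inj: "inj_on kp P"
  proof (rule inj_onI)
    fix p q assume pq: "p \<in> P" "q \<in> P" "kp p = kp q"
    have "fst q = fst p \<and> snd q = snd p"
      using block_partition_unique_block[OF P kp(3)[OF pq(1)], of "fst p" "snd p" "fst q" "snd q"]
        kp[OF pq(1)] kp[OF pq(2)] pq by simp
    then show "p = q" by (simp add: prod_eq_iff)
  qed
  have inj': "inj_on (\<lambda>p. n + 1 - kp p) P"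
  proof (rule inj_onI)
    fix p q assume pq: "p \<in> P" "q \<in> P" "n + 1 - kp p = n + 1 - kp q"
    then have "kp p = kp q" using kp(3)[OF pq(1)] kp(3)[OF pq(2)] by auto
    then show "p = q" using pq(1,2) by (rule inj_onD[OF inj])
  qed
  have block: "z ^ \<nu> * (y (snd p) - y (fst p)) \<le> a (kp p) + a' (n + 1 - kp p)"
    if p: "p \<in> P" for p
  proof -
    obtain u v where uv: "p = (u, v)" by (cases p)
    have b: "1 \<le> u" "v \<le> n" using block_partitionD(2)[OF P] p uv by auto
    let ?k = "kp p"
    have "a ?k = (y v - y ?k) * z ^ ?k"
      unfolding a_def using blk_right_eq[OF P] p uv kp[OF p] by simp
    moreover have "a' (n + 1 - ?k) = (y ?k - y u) * z ^ (n + 1 - ?k)"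
      unfolding a'_def reflect_pos_def
      using blk_right_reflect_blocks[OF P] p uv kp[OF p] b by simp
    moreover have "z ^ \<nu> * (y v - y u) \<le> (y v - y ?k) * z ^ ?k + (y ?k - y u) * z ^ (n + 1 - ?k)"
      using kp[OF p] uv b by (intro power_split_ineq z mono_onD[OF y]) auto
    ultimately show ?thesis using uv by simp
  qed
  have sum_a: "sum a (kp ` P) \<le> sum a {1..n}"
    using kp K_slice_term_nonneg[OF P y z] unfolding a_def by (intro sum_mono2) auto
  have sum_a': "sum a' ((\<lambda>p. n + 1 - kp p) ` P) \<le> sum a' {1..n}"
    using kp(3) K_slice_term_nonneg[OF block_partition_reflect_blocks[OF P] mono_on_reflect_pos[OF y] z]
    unfolding a'_def by (intro sum_mono2) (fastforce+)
  have "z ^ \<nu> * (\<Sum>p\<in>P. y (snd p) - y (fst p)) \<le> (\<Sum>p\<in>P. a (kp p) + a' (n + 1 - kp p))"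
    unfolding sum_distrib_left by (rule sum_mono) (rule block)
  also have "\<dots> = sum a (kp ` P) + sum a' ((\<lambda>p. n + 1 - kp p) ` P)"
    using sum.reindex[OF inj, of a] sum.reindex[OF inj', of a'] by (simp add: sum.distrib)
  also have "\<dots> \<le> sum a {1..n} + sum a' {1..n}"
    using sum_a sum_a' by (rule add_mono)
  finally show ?thesis unfolding K_slice_def a_def a'_def .
qed

lemma one_energy_le_K_gen_reflect:
  assumes ts: "twist_system n m \<rho> x B" and z: "1 \<le> z" and \<nu>: "2 * \<nu> \<le> n + 1"
  shows "one_energy x B \<le> ennreal (z powr - real \<nu>)
    * (K_gen n x B z + K_gen n (\<lambda>t. reflect_pos n (x t)) (\<lambda>t. reflect_blocks n (B t)) z)"
proof -
  define c where "c = z powr - real \<nu>"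
  define A where "A t = K_slice n (x t) (B t) z" for t
  define A' where "A' t = K_slice n (reflect_pos n (x t)) (reflect_blocks n (B t)) z" for t
  have c: "c = 1 / z ^ \<nu>" "0 \<le> c" "0 < z ^ \<nu>"
    unfolding c_def using z by (simp_all add: powr_minus powr_realpow divide_inverse)
  have P: "block_partition n m (B t)" and y: "mono_on {1..n} (x t)" for t
    using twist_system_block_partition[OF ts] twist_system_sorted[OF ts] by auto
  have A0: "0 \<le> A t" "0 \<le> A' t" for t
    unfolding A_def A'_def K_slice_def
    using K_slice_term_nonneg[OF P y z]
      K_slice_term_nonneg[OF block_partition_reflect_blocks[OF P] mono_on_reflect_pos[OF y] z]
    by (auto intro: sum_nonneg)
  have step: "ennreal (\<Sum>p\<in>B t. x t (snd p) - x t (fst p))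
      \<le> ennreal c * ennreal (A t) + ennreal c * ennreal (A' t)" for t
  proof -
    have "z ^ \<nu> * (\<Sum>p\<in>B t. x t (snd p) - x t (fst p)) \<le> A t + A' t"
      unfolding A_def A'_def by (rule block_sum_le_K_slice_reflect[OF P y z \<nu>])
    then have "(\<Sum>p\<in>B t. x t (snd p) - x t (fst p)) \<le> (A t + A' t) / z ^ \<nu>"
      using c(3) by (subst pos_le_divide_eq) (simp_all add: mult.commute)
    then have "(\<Sum>p\<in>B t. x t (snd p) - x t (fst p)) \<le> c * A t + c * A' t"
      unfolding c(1) by (simp add: add_divide_distrib)
    then have "ennreal (\<Sum>p\<in>B t. x t (snd p) - x t (fst p)) \<le> ennreal (c * A t + c * A' t)"
      by (rule ennreal_leI)
    also have "\<dots> = ennreal c * ennreal (A t) + ennreal c * ennreal (A' t)"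
      using c(2) A0[of t] by (simp add: ennreal_plus ennreal_mult)
    finally show ?thesis .
  qed
  have "one_energy x B \<le> (\<Sum>t. ennreal c * ennreal (A t) + ennreal c * ennreal (A' t))"
    unfolding one_energy_def by (rule suminf_le[OF step summableI summableI])
  also have "\<dots> = ennreal c * ((\<Sum>t. ennreal (A t)) + (\<Sum>t. ennreal (A' t)))"
    by (simp add: suminf_add[symmetric] distrib_left)
  finally show ?thesis unfolding c_def A_def A'_def K_gen_eq_suminf_K_slice .
qed

lemma K_gen_le_K_TW: "(x, B) \<in> admissible n m \<rho> \<Longrightarrow> K_gen n x B z \<le> K_TW n m \<rho> z"
  unfolding K_TW_def by (rule SUP_upper2[where i="(x, B)"]) auto

theorem lemma3:
  fixes n m :: nat and \<rho> z :: real
  assumes "0 < \<rho>" and "\<rho> \<le> 1/2" and "1 \<le> z"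
  shows "E_TW n m \<rho> \<le> ennreal (2 * z powr (- real (nat \<lceil>real n / 2\<rceil>))) * K_TW n m \<rho> z"
proof -
  define c where "c = z powr (- real (nat \<lceil>real n / 2\<rceil>))"
  have bound: "one_energy x B \<le> ennreal c * (K_TW n m \<rho> z + K_TW n m \<rho> z)"
    if adm: "(x, B) \<in> admissible n m \<rho>" for x B
  proof -
    have "twist_system n m \<rho> x B" using adm unfolding admissible_def by simp
    from one_energy_le_K_gen_reflect[OF this \<open>1 \<le> z\<close> double_ceiling_half_le]
    show ?thesis unfolding c_def
      by (rule order_trans) (intro mult_left_mono add_mono K_gen_le_K_TW adm admissible_reflect; simp)
  qed
  have "E_TW n m \<rho> \<le> ennreal c * (K_TW n m \<rho> z + K_TW n m \<rho> z)"
    unfolding E_TW_def by (rule SUP_least) (use bound in auto)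
  also have "\<dots> = ennreal (2 * c) * K_TW n m \<rho> z"
  proof -
    have "ennreal (2 * c) = ennreal c + ennreal c"
      unfolding mult_2 by (rule ennreal_plus) (simp_all add: c_def)
    then show ?thesis by (simp only: distrib_left distrib_right)
  qed
  finally show ?thesis unfolding c_def .
qed

end
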